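(* For every $n\in\mathbb N$, $\theta_n(B_n)>c\sqrt n$ with $c=\dfrac{\sqrt[3]{\pi}}{\sqrt{12e}\cdot\sqrt[6]{3}}=0.2135\ldots$. Together with the upper bound $\theta_n(B_n)\le\sqrt{n+1}$, this gives $\theta_n(B_n)\asymp\sqrt n$.
   Context: $B_n$ is the closed unit Euclidean ball in $\mathbb R^n$. For nodes $x^{(1)},\dots,x^{(n+1)}\in B_n$ that are vertices of a nondegenerate simplex, the interpolation projector $P:C(B_n)\to\Pi_1(\mathbb R^n)$ maps $f$ to the unique polynomial $p$ of degree $\le1$ with $p(x^{(j)})=f(x^{(j)})$; $\|P\|_{B_n}$ is its operator norm with respect to the sup norm, and $\theta_n(B_n)$ is the minimum of $\|P\|_{B_n}$ over all such node sets. $L(n)\asymp M(n)$ means $c_1M(n)\le L(n)\le c_2M(n)$ for constants $c_1,c_2>0$ independent of $n$. *)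

theory Defs
  imports "HOL-Analysis.Analysis"
begin

text \<open>Nodes x 0, ..., x n in the unit ball of R^n (n = CARD('n)), indexed by {..CARD('n)}.\<close>

definition admissible_nodes :: "(nat \<Rightarrow> real^'n) \<Rightarrow> bool" where
  "admissible_nodes x \<longleftrightarrow>
     (\<forall>j\<le>CARD('n). x j \<in> cball 0 1) \<and> inj_on x {..CARD('n)} \<and>
     \<not> affine_dependent (x ` {..CARD('n)})"

definition affine_poly :: "(real^'n \<Rightarrow> real) \<Rightarrow> bool" where
  "affine_poly p \<longleftrightarrow> (\<exists>a b. p = (\<lambda>y. a \<bullet> y + b))"

definition interp :: "(nat \<Rightarrow> real^'n) \<Rightarrow> (real^'n \<Rightarrow> real) \<Rightarrow> (real^'n \<Rightarrow> real)" where
  "interp x f = (THE p. affine_poly p \<and> (\<forall>j\<le>CARD('n). p (x j) = f (x j)))"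

text \<open>Operator norm of P on C(B_n) with the sup norm:
  sup over continuous f with sup norm at most 1 of max over B_n of the interpolant.\<close>

definition interp_norm :: "(nat \<Rightarrow> real^'n) \<Rightarrow> real" where
  "interp_norm x = Sup {\<bar>interp x f y\<bar> | f y.
      continuous_on (cball (0::real^'n) 1) f \<and> (\<forall>z\<in>cball 0 1. \<bar>f z\<bar> \<le> 1) \<and> y \<in> cball 0 1}"

definition theta_ball :: "('n::finite) itself \<Rightarrow> real" where
  "theta_ball _ = Inf {interp_norm (x :: nat \<Rightarrow> real^'n) | x. admissible_nodes x}"

end

(* Write the Lagrange basis of the nodes as \<lambda>_j(y) = A_j \<bullet> y + c_j. Since \<lambda>_j drops from 1 to 0
   between two points of the unit ball, |A_j| \<ge> 1/2. Choosing signs s_j greedily gives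
   |\<Sum> s_j A_j|^2 \<ge> \<Sum> |A_j|^2 \<ge> (n+1)/4. The affine function with values s_j at the nodes is the
   interpolant of its own clipping to [-1,1], a continuous function of sup norm at most 1, and it
   attains the value |\<Sum> s_j A_j| at one of the two unit vectors parallel to \<Sum> s_j A_j. Hence every
   interpolation projector has norm at least sqrt(n+1)/2, which exceeds c sqrt n because c < 1/2.
   For the upper bound, place the nodes at the vertices of a regular simplex inscribed in the unit
   sphere: then \<Sum>_j \<lambda>_j(y)^2 \<le> 1 on the ball, so the Lebesgue function \<Sum>_j |\<lambda>_j| is at most
   sqrt(n+1). *)

theory Submission
  imports Defs
begin

section \<open>Affine functions on affinely independent sets\<close>

lemma affine_independent_interpolation:
  fixes S :: "'a::euclidean_space set"
  assumes "\<not> affine_dependent S"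
  shows "\<exists>a b. \<forall>v\<in>S. a \<bullet> v + b = w v"
proof (cases "S = {}")
  case False
  then obtain v0 where "v0 \<in> S" by blast
  then have "\<not> affine_dependent (insert v0 (S - {v0}))"
    using assms by (simp add: insert_absorb)
  then have "\<not> dependent ((\<lambda>v. - v0 + v) ` (S - {v0}))"
    using affine_dependent_iff_dependent[of v0 "S - {v0}"] by simp
  then obtain g :: "'a \<Rightarrow> real" where g: "linear g"
    "\<forall>u\<in>(\<lambda>v. - v0 + v) ` (S - {v0}). g u = w (v0 + u) - w v0"
    using linear_independent_extend[of "(\<lambda>v. - v0 + v) ` (S - {v0})" "\<lambda>u. w (v0 + u) - w v0"]
    by blast
  define a where "a = adjoint g 1"
  have ga: "g u = a \<bullet> u" for u
    using adjoint_works[OF g(1), of u 1] by (simp add: a_def inner_commute)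
  have "a \<bullet> v + (w v0 - a \<bullet> v0) = w v" if "v \<in> S" for v
  proof (cases "v = v0")
    case False
    then have "g (- v0 + v) = w v - w v0" using g(2) that by auto
    then show ?thesis by (simp add: ga inner_diff_right algebra_simps)
  qed simp
  then show ?thesis by blast
qed simp

lemma affine_independent_if_separating:
  fixes S :: "'a::real_inner set"
  assumes "finite S"
    and sep: "\<And>v. v \<in> S \<Longrightarrow> \<exists>a b. a \<bullet> v + b = 1 \<and> (\<forall>w\<in>S - {v}. a \<bullet> w + b = 0)"
  shows "\<not> affine_dependent S"
proof
  assume "affine_dependent S"
  then obtain U v where U: "sum U S = 0" "(\<Sum>w\<in>S. U w *\<^sub>R w) = 0" and v: "v \<in> S" "U v \<noteq> 0"
    using affine_dependent_explicit_finite[OF assms(1)] by blast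
  obtain a b where ab: "a \<bullet> v + b = 1" "\<forall>w\<in>S - {v}. a \<bullet> w + b = 0"
    using sep[OF v(1)] by blast
  have "0 = a \<bullet> (\<Sum>w\<in>S. U w *\<^sub>R w) + b * sum U S"
    using U by simp
  also have "\<dots> = (\<Sum>w\<in>S. U w * (a \<bullet> w + b))"
    by (simp add: inner_sum_right sum_distrib_left sum.distrib algebra_simps)
  also have "\<dots> = (\<Sum>w\<in>S. if w = v then U w else 0)"
    using ab by (intro sum.cong) auto
  also have "\<dots> = U v"
    using v assms(1) by simp
  finally show False
    using v by simp
qed

lemma affine_poly_eq_on_affine_hull:
  assumes "affine_poly p" "affine_poly q" "\<forall>v\<in>S. p v = q v" "y \<in> affine hull S"
  shows "p y = q y"
proof -
  obtain a b a' b' where p: "p = (\<lambda>y. a \<bullet> y + b)" and q: "q = (\<lambda>y. a' \<bullet> y + b')"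
    using assms(1,2) unfolding affine_poly_def by blast
  have "{y. p y = q y} = {y. (a - a') \<bullet> y = b' - b}"
    by (auto simp: p q inner_diff_left algebra_simps)
  then have "affine {y. p y = q y}"
    using affine_hyperplane by metis
  then have "affine hull S \<subseteq> {y. p y = q y}"
    using assms(3) by (intro hull_minimal) auto
  then show ?thesis
    using assms(4) by blast
qed

section \<open>Interpolation at admissible nodes\<close>

definition lagrange_basis :: "(nat \<Rightarrow> real^'n) \<Rightarrow> (nat \<Rightarrow> real^'n) \<Rightarrow> (nat \<Rightarrow> real) \<Rightarrow> bool" where
  "lagrange_basis x A c \<longleftrightarrow>
     (\<forall>j\<le>CARD('n). \<forall>k\<le>CARD('n). A j \<bullet> x k + c j = (if j = k then 1 else 0))"

definition interp_values :: "(nat \<Rightarrow> real^'n) \<Rightarrow> real set" where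
  "interp_values x = {\<bar>interp x f y\<bar> | f y.
      continuous_on (cball (0::real^'n) 1) f \<and> (\<forall>z\<in>cball 0 1. \<bar>f z\<bar> \<le> 1) \<and> y \<in> cball 0 1}"

lemma interp_norm_eq_Sup: "interp_norm x = Sup (interp_values x)"
  by (simp add: interp_norm_def interp_values_def)

lemma admissible_nodes_affine_hull:
  assumes "admissible_nodes (x :: nat \<Rightarrow> real^'n)"
  shows "affine hull (x ` {..CARD('n)}) = UNIV"
proof -
  have "card (x ` {..CARD('n)}) = CARD('n) + 1"
    using assms by (simp add: admissible_nodes_def card_image)
  moreover have "\<not> affine_dependent (x ` {..CARD('n)})"
    using assms by (simp add: admissible_nodes_def)
  ultimately have "aff_dim (x ` {..CARD('n)}) = int CARD('n)"
    using aff_dim_affine_independent by force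
  then show ?thesis
    using aff_dim_eq_full by (metis DIM_cart DIM_real mult_1_right)
qed

lemma interp_eqI:
  assumes "admissible_nodes (x :: nat \<Rightarrow> real^'n)" "affine_poly p"
    and "\<forall>j\<le>CARD('n). p (x j) = f (x j)"
  shows "interp x f = p"
  unfolding interp_def
proof (rule the_equality)
  fix q assume q: "affine_poly q \<and> (\<forall>j\<le>CARD('n). q (x j) = f (x j))"
  show "q = p"
  proof
    fix y :: "real^'n"
    show "q y = p y"
      using affine_poly_eq_on_affine_hull[of q p "x ` {..CARD('n)}" y] q assms
        admissible_nodes_affine_hull[OF assms(1)] by auto
  qed
qed (use assms in auto)

lemma lagrange_basis_exists:
  assumes "admissible_nodes (x :: nat \<Rightarrow> real^'n)"
  shows "\<exists>A c. lagrange_basis x A c"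
proof -
  have "\<exists>a b. \<forall>v\<in>x ` {..CARD('n)}. a \<bullet> v + b = (if v = x j then 1 else 0)" for j
    using affine_independent_interpolation[of "x ` {..CARD('n)}" "\<lambda>v. if v = x j then 1 else 0"] assms
    by (simp add: admissible_nodes_def)
  then obtain A c where Ac: "\<And>j v. v \<in> x ` {..CARD('n)} \<Longrightarrow> A j \<bullet> v + c j = (if v = x j then 1 else 0)"
    by metis
  have nodes_eq: "x k = x j \<longleftrightarrow> j = k" if "j \<le> CARD('n)" "k \<le> CARD('n)" for j k
    using assms that by (auto simp: admissible_nodes_def inj_on_def)
  have "lagrange_basis x A c"
    unfolding lagrange_basis_def
  proof (intro allI impI)
    fix j k assume "j \<le> CARD('n)" "k \<le> CARD('n)"
    then show "A j \<bullet> x k + c j = (if j = k then 1 else 0)"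
      using Ac[of "x k" j] nodes_eq[of j k] by simp
  qed
  then show ?thesis by blast
qed

lemma lagrange_basis_sum:
  assumes "lagrange_basis (x :: nat \<Rightarrow> real^'n) A c" "k \<le> CARD('n)"
  shows "(\<Sum>j\<le>CARD('n). t j * (A j \<bullet> x k + c j)) = t k"
proof -
  have "(\<Sum>j\<le>CARD('n). t j * (A j \<bullet> x k + c j)) = (\<Sum>j\<le>CARD('n). if j = k then t j else 0)"
  proof (rule sum.cong)
    fix j assume "j \<in> {..CARD('n)}"
    then have "A j \<bullet> x k + c j = (if j = k then 1 else 0)"
      using assms unfolding lagrange_basis_def by blast
    then show "t j * (A j \<bullet> x k + c j) = (if j = k then t j else 0)"
      by simp
  qed simp
  also have "\<dots> = t k"
    using assms(2) by simp
  finally show ?thesis .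
qed

lemma interp_lagrange:
  assumes "admissible_nodes (x :: nat \<Rightarrow> real^'n)" "lagrange_basis x A c"
  shows "interp x f = (\<lambda>y. \<Sum>j\<le>CARD('n). f (x j) * (A j \<bullet> y + c j))"
proof (rule interp_eqI[OF assms(1)])
  have "(\<lambda>y. \<Sum>j\<le>CARD('n). f (x j) * (A j \<bullet> y + c j))
      = (\<lambda>y. (\<Sum>j\<le>CARD('n). f (x j) *\<^sub>R A j) \<bullet> y + (\<Sum>j\<le>CARD('n). f (x j) * c j))"
    by (simp add: inner_sum_left sum.distrib distrib_left)
  then show "affine_poly (\<lambda>y. \<Sum>j\<le>CARD('n). f (x j) * (A j \<bullet> y + c j))"
    unfolding affine_poly_def by blast
  show "\<forall>k\<le>CARD('n). (\<Sum>j\<le>CARD('n). f (x j) * (A j \<bullet> x k + c j)) = f (x k)"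
    by (intro allI impI lagrange_basis_sum[OF assms(2)])
qed

lemma interp_values_le_lebesgue:
  assumes "admissible_nodes (x :: nat \<Rightarrow> real^'n)" "lagrange_basis x A c" "t \<in> interp_values x"
  obtains y where "y \<in> cball 0 1" "t \<le> (\<Sum>j\<le>CARD('n). \<bar>A j \<bullet> y + c j\<bar>)"
proof -
  obtain f y where t: "t = \<bar>interp x f y\<bar>" and f: "\<forall>z\<in>cball 0 1. \<bar>f z\<bar> \<le> 1"
    and y: "y \<in> cball (0::real^'n) 1"
    using assms(3) unfolding interp_values_def by blast
  have "t \<le> (\<Sum>j\<le>CARD('n). \<bar>f (x j) * (A j \<bullet> y + c j)\<bar>)"
    unfolding t interp_lagrange[OF assms(1,2)] by (rule sum_abs)
  also have "\<dots> \<le> (\<Sum>j\<le>CARD('n). \<bar>A j \<bullet> y + c j\<bar>)"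
  proof (rule sum_mono)
    fix j assume "j \<in> {..CARD('n)}"
    then have "\<bar>f (x j)\<bar> \<le> 1"
      using assms(1) f by (simp add: admissible_nodes_def)
    then show "\<bar>f (x j) * (A j \<bullet> y + c j)\<bar> \<le> \<bar>A j \<bullet> y + c j\<bar>"
      by (simp add: abs_mult mult_left_le_one_le)
  qed
  finally show ?thesis
    by (rule that[OF y])
qed

lemma bdd_above_interp_values:
  assumes "admissible_nodes (x :: nat \<Rightarrow> real^'n)"
  shows "bdd_above (interp_values x)"
proof -
  obtain A c where basis: "lagrange_basis x A c"
    using lagrange_basis_exists[OF assms] by blast
  have "t \<le> (\<Sum>j\<le>CARD('n). norm (A j) + \<bar>c j\<bar>)" if t_mem: "t \<in> interp_values x" for t
  proof -
    obtain y where y: "y \<in> cball 0 1" and t: "t \<le> (\<Sum>j\<le>CARD('n). \<bar>A j \<bullet> y + c j\<bar>)"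
      using interp_values_le_lebesgue[OF assms basis t_mem] by blast
    note t
    also have "\<dots> \<le> (\<Sum>j\<le>CARD('n). norm (A j) + \<bar>c j\<bar>)"
    proof (rule sum_mono)
      fix j
      have "\<bar>A j \<bullet> y\<bar> \<le> norm (A j) * norm y" by (rule Cauchy_Schwarz_ineq2)
      also have "\<dots> \<le> norm (A j)" using y by (simp add: mult_left_le)
      finally show "\<bar>A j \<bullet> y + c j\<bar> \<le> norm (A j) + \<bar>c j\<bar>" by linarith
    qed
    finally show ?thesis .
  qed
  then show ?thesis
    by (rule bdd_aboveI)
qed

lemma interp_abs_le_interp_norm:
  assumes "admissible_nodes (x :: nat \<Rightarrow> real^'n)" "continuous_on (cball 0 1) f"
    and "\<forall>z\<in>cball 0 1. \<bar>f z\<bar> \<le> 1" "y \<in> cball 0 1"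
  shows "\<bar>interp x f y\<bar> \<le> interp_norm x"
  unfolding interp_norm_eq_Sup
  by (rule cSup_upper[OF _ bdd_above_interp_values[OF assms(1)]])
    (use assms in \<open>auto simp: interp_values_def\<close>)

lemma interp_norm_le_lebesgue:
  assumes "admissible_nodes (x :: nat \<Rightarrow> real^'n)" "lagrange_basis x A c"
    and "\<forall>y\<in>cball 0 1. (\<Sum>j\<le>CARD('n). \<bar>A j \<bullet> y + c j\<bar>) \<le> M"
  shows "interp_norm x \<le> M"
  unfolding interp_norm_eq_Sup
proof (rule cSup_least)
  have "\<bar>interp x (\<lambda>_. 0) 0\<bar> \<in> interp_values x"
    unfolding interp_values_def using continuous_on_const by fastforce
  then show "interp_values x \<noteq> {}"
    by blast
next
  fix t assume "t \<in> interp_values x"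
  then obtain y where "y \<in> cball 0 1" "t \<le> (\<Sum>j\<le>CARD('n). \<bar>A j \<bullet> y + c j\<bar>)"
    using interp_values_le_lebesgue[OF assms(1,2)] by blast
  then show "t \<le> M"
    using assms(3) by force
qed

section \<open>The lower bound\<close>

lemma exists_signs_norm_sum_ge:
  fixes A :: "nat \<Rightarrow> 'a::real_inner"
  shows "\<exists>s. (\<forall>j. \<bar>s j\<bar> = (1::real)) \<and> (\<Sum>j<m. (norm (A j))\<^sup>2) \<le> (norm (\<Sum>j<m. s j *\<^sub>R A j))\<^sup>2"
proof (induction m)
  case 0
  show ?case by (intro exI[of _ "\<lambda>_. 1"]) auto
next
  case (Suc m)
  then obtain s where s: "\<forall>j. \<bar>s j\<bar> = (1::real)"
    "(\<Sum>j<m. (norm (A j))\<^sup>2) \<le> (norm (\<Sum>j<m. s j *\<^sub>R A j))\<^sup>2"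
    by blast
  define v where "v = (\<Sum>j<m. s j *\<^sub>R A j)"
  \<comment> \<open>choose the new sign so that the cross term \<open>2 t (v \<bullet> A m)\<close> is nonnegative\<close>
  define t where "t = (if v \<bullet> A m \<ge> 0 then 1 else -1::real)"
  define s' where "s' = s(m := t)"
  have "(\<Sum>j<m. s' j *\<^sub>R A j) = v"
    unfolding v_def s'_def by (intro sum.cong) auto
  then have "(\<Sum>j<Suc m. s' j *\<^sub>R A j) = v + t *\<^sub>R A m"
    by (simp add: s'_def)
  moreover have "(norm (v + t *\<^sub>R A m))\<^sup>2 = (norm v)\<^sup>2 + 2 * t * (v \<bullet> A m) + t\<^sup>2 * (norm (A m))\<^sup>2"
    using dot_norm[of v "t *\<^sub>R A m"] by (simp add: power_mult_distrib)
  ultimately have "(norm (\<Sum>j<Suc m. s' j *\<^sub>R A j))\<^sup>2 = (norm v)\<^sup>2 + 2 * t * (v \<bullet> A m) + t\<^sup>2 * (norm (A m))\<^sup>2"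
    by simp
  moreover have "t * (v \<bullet> A m) \<ge> 0" "t\<^sup>2 = 1"
    unfolding t_def by auto
  moreover have "\<forall>j. \<bar>s' j\<bar> = 1"
    using s(1) unfolding s'_def t_def by auto
  ultimately show ?case
    using s(2) unfolding v_def by (intro exI[of _ s']) auto
qed

lemma lagrange_basis_norm_ge:
  assumes "admissible_nodes (x :: nat \<Rightarrow> real^'n)" "lagrange_basis x A c" "j \<le> CARD('n)"
  shows "1 / 2 \<le> norm (A j)"
proof -
  define k where "k = (if j = 0 then 1 else 0::nat)"
  have k: "k \<le> CARD('n)" "k \<noteq> j"
    unfolding k_def using assms(3) by auto
  have "A j \<bullet> x j + c j = 1" "A j \<bullet> x k + c j = 0"
    using assms(2,3) k by (auto simp: lagrange_basis_def)
  then have "1 = A j \<bullet> (x j - x k)"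
    by (simp add: inner_diff_right)
  also have "\<dots> \<le> norm (A j) * norm (x j - x k)"
    by (rule norm_cauchy_schwarz)
  also have "\<dots> \<le> norm (A j) * 2"
  proof -
    have "norm (x j - x k) \<le> norm (x j) + norm (x k)"
      by (rule norm_triangle_ineq4)
    also have "\<dots> \<le> 2"
      using assms(1,3) k unfolding admissible_nodes_def by (metis add_mono mem_cball_0 one_add_one)
    finally show ?thesis
      by (simp add: mult_left_mono)
  qed
  finally show ?thesis by simp
qed

lemma norm_le_interp_norm:
  assumes "admissible_nodes (x :: nat \<Rightarrow> real^'n)" "\<forall>k\<le>CARD('n). \<bar>a \<bullet> x k + b\<bar> \<le> 1"
  shows "norm a \<le> interp_norm x"
proof -
  define p where "p y = a \<bullet> y + b" for y
  define f where "f z = max (-1) (min 1 (p z))" for z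
  have "affine_poly p"
    unfolding affine_poly_def p_def by blast
  moreover have "\<forall>k\<le>CARD('n). p (x k) = f (x k)"
    using assms(2) by (auto simp: f_def p_def abs_le_iff)
  ultimately have "interp x f = p"
    by (rule interp_eqI[OF assms(1)])
  moreover have "continuous_on (cball 0 1) f"
    unfolding f_def p_def by (intro continuous_intros)
  moreover have "\<forall>z\<in>cball 0 1. \<bar>f z\<bar> \<le> 1"
    by (auto simp: f_def)
  ultimately have bound: "\<bar>p y\<bar> \<le> interp_norm x" if "y \<in> cball 0 1" for y
    using interp_abs_le_interp_norm[OF assms(1)] that by metis
  have "a \<bullet> sgn a = norm a"
    by (cases "a = 0") (simp_all add: sgn_div_norm dot_square_norm power2_eq_square)
  then have "p (sgn a) - p (- sgn a) = 2 * norm a"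
    by (simp add: p_def inner_minus_right)
  moreover have "norm (sgn a) \<le> 1"
    by (simp add: norm_sgn)
  then have "\<bar>p (sgn a)\<bar> \<le> interp_norm x" "\<bar>p (- sgn a)\<bar> \<le> interp_norm x"
    by (intro bound; simp add: mem_cball_0)+
  ultimately show ?thesis
    by linarith
qed

lemma interp_norm_ge_sqrt:
  assumes "admissible_nodes (x :: nat \<Rightarrow> real^'n)"
  shows "sqrt (real CARD('n) + 1) / 2 \<le> interp_norm x"
proof -
  obtain A c where basis: "lagrange_basis x A c"
    using lagrange_basis_exists[OF assms] by blast
  obtain s where s: "\<forall>j. \<bar>s j\<bar> = (1::real)"
    "(\<Sum>j<Suc CARD('n). (norm (A j))\<^sup>2) \<le> (norm (\<Sum>j<Suc CARD('n). s j *\<^sub>R A j))\<^sup>2"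
    using exists_signs_norm_sum_ge[of A "Suc CARD('n)"] by blast
  define a where "a = (\<Sum>j\<le>CARD('n). s j *\<^sub>R A j)"
  define b where "b = (\<Sum>j\<le>CARD('n). s j * c j)"
  have "a \<bullet> x k + b = (\<Sum>j\<le>CARD('n). s j * (A j \<bullet> x k + c j))" for k
    by (simp add: a_def b_def inner_sum_left sum.distrib distrib_left)
  then have "a \<bullet> x k + b = s k" if "k \<le> CARD('n)" for k
    using lagrange_basis_sum[OF basis that] by simp
  then have "\<forall>k\<le>CARD('n). \<bar>a \<bullet> x k + b\<bar> \<le> 1"
    using s(1) by simp
  then have "norm a \<le> interp_norm x"
    by (rule norm_le_interp_norm[OF assms])
  moreover have "(real CARD('n) + 1) / 4 \<le> (norm a)\<^sup>2"
  proof -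
    have "(\<Sum>j\<le>CARD('n). (1 / 2::real)\<^sup>2) \<le> (\<Sum>j\<le>CARD('n). (norm (A j))\<^sup>2)"
      using lagrange_basis_norm_ge[OF assms basis] by (intro sum_mono power_mono) auto
    then show ?thesis
      using s(2) unfolding a_def lessThan_Suc_atMost by (simp add: power2_eq_square)
  qed
  then have "sqrt ((real CARD('n) + 1) / 4) \<le> norm a"
    by (metis real_sqrt_le_mono real_sqrt_abs abs_norm_cancel)
  then have "sqrt (real CARD('n) + 1) / 2 \<le> norm a"
    by (simp add: real_sqrt_divide)
  ultimately show ?thesis
    by linarith
qed

section \<open>The upper bound\<close>

definition regular_simplex :: "(nat \<Rightarrow> 'a::real_inner) \<Rightarrow> nat \<Rightarrow> bool" where
  "regular_simplex u m \<longleftrightarrow> (\<forall>j\<le>m. \<forall>k\<le>m. u j \<bullet> u k = (if j = k then 1 else - 1 / real m))"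

lemma regular_simplex_norm:
  assumes "regular_simplex u m" "j \<le> m"
  shows "norm (u j) = 1"
  using assms unfolding regular_simplex_def norm_eq_1 by simp

lemma regular_simplex_norm_sum_sq:
  assumes "regular_simplex u m"
  shows "(norm (\<Sum>j\<le>m. t j *\<^sub>R u j))\<^sup>2
    = (1 + 1 / real m) * (\<Sum>j\<le>m. (t j)\<^sup>2) - (\<Sum>j\<le>m. t j)\<^sup>2 / real m"
proof -
  have entry: "t j * (t k * (u k \<bullet> u j))
      = (if j = k then (1 + 1 / real m) * (t j)\<^sup>2 else 0) - t j * t k / real m"
    if "j \<in> {..m}" "k \<in> {..m}" for j k
  proof -
    have "u k \<bullet> u j = (if j = k then 1 else - 1 / real m)"
      using assms that unfolding regular_simplex_def by auto
    then show ?thesis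
      by (cases "j = k") (simp_all add: power2_eq_square algebra_simps)
  qed
  have "(norm (\<Sum>j\<le>m. t j *\<^sub>R u j))\<^sup>2 = (\<Sum>j\<le>m. \<Sum>k\<le>m. t j * (t k * (u k \<bullet> u j)))"
    by (simp add: power2_norm_eq_inner inner_sum_left inner_sum_right sum_distrib_left)
  also have "\<dots> = (\<Sum>j\<le>m. \<Sum>k\<le>m. (if j = k then (1 + 1 / real m) * (t j)\<^sup>2 else 0) - t j * t k / real m)"
    by (intro sum.cong refl) (rule entry)
  also have "\<dots> = (1 + 1 / real m) * (\<Sum>j\<le>m. (t j)\<^sup>2) - (\<Sum>j\<le>m. \<Sum>k\<le>m. t j * t k) / real m"
    by (simp add: sum_subtractf sum_divide_distrib sum_distrib_left)
  also have "\<dots> = (1 + 1 / real m) * (\<Sum>j\<le>m. (t j)\<^sup>2) - (\<Sum>j\<le>m. t j)\<^sup>2 / real m"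
    by (simp only: power2_eq_square sum_product)
  finally show ?thesis .
qed

lemma regular_simplex_sum_eq_0:
  assumes "regular_simplex u m" "0 < m"
  shows "(\<Sum>j\<le>m. u j) = 0"
proof -
  have "(norm (\<Sum>j\<le>m. 1 *\<^sub>R u j))\<^sup>2 = (1 + 1 / real m) * (real m + 1) - (real m + 1)\<^sup>2 / real m"
    using regular_simplex_norm_sum_sq[OF assms(1), of "\<lambda>_. 1"] by (simp add: add.commute)
  also have "\<dots> = 0"
    using assms(2) by (simp add: field_simps power2_eq_square)
  finally show ?thesis by simp
qed

lemma regular_simplex_sum_inner_sq_le:
  assumes "regular_simplex u m" "0 < m"
  shows "(\<Sum>j\<le>m. (u j \<bullet> y)\<^sup>2) \<le> (1 + 1 / real m) * (norm y)\<^sup>2"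
proof -
  define t where "t j = u j \<bullet> y" for j
  define T where "T = (\<Sum>j\<le>m. (t j)\<^sup>2)"
  define v where "v = (\<Sum>j\<le>m. t j *\<^sub>R u j)"
  have "(\<Sum>j\<le>m. t j) = (\<Sum>j\<le>m. u j) \<bullet> y"
    by (simp add: t_def inner_sum_left)
  then have "(\<Sum>j\<le>m. t j) = 0"
    using regular_simplex_sum_eq_0[OF assms] by simp
  then have v_sq: "(norm v)\<^sup>2 = (1 + 1 / real m) * T"
    using regular_simplex_norm_sum_sq[OF assms(1), of t] by (simp add: v_def T_def)
  have "v \<bullet> y = T"
    by (simp add: v_def T_def t_def inner_sum_left power2_eq_square)
  then have "T\<^sup>2 \<le> (norm v)\<^sup>2 * (norm y)\<^sup>2"
    by (metis Cauchy_Schwarz_ineq dot_square_norm)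
  then have "T * T \<le> ((1 + 1 / real m) * (norm y)\<^sup>2) * T"
    unfolding v_sq by (simp add: power2_eq_square mult_ac)
  moreover have "0 \<le> T"
    by (simp add: T_def sum_nonneg)
  ultimately have "T \<le> (1 + 1 / real m) * (norm y)\<^sup>2"
    by (cases "T = 0") (auto intro: mult_right_le_imp_le)
  then show ?thesis
    by (simp add: T_def t_def)
qed

lemma regular_simplex_lagrange_sum_sq_le:
  assumes "regular_simplex u m" "0 < m" "norm y \<le> 1"
  defines "q \<equiv> real m / (real m + 1)" and "e \<equiv> 1 / (real m + 1)"
  shows "(\<Sum>j\<le>m. (q * (u j \<bullet> y) + e)\<^sup>2) \<le> 1"
proof -
  have "(\<Sum>j\<le>m. u j \<bullet> y) = 0"
    using regular_simplex_sum_eq_0[OF assms(1,2)] by (simp add: inner_sum_left[symmetric])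
  moreover have "(\<Sum>j\<le>m. (q * (u j \<bullet> y) + e)\<^sup>2)
      = q\<^sup>2 * (\<Sum>j\<le>m. (u j \<bullet> y)\<^sup>2) + 2 * q * e * (\<Sum>j\<le>m. u j \<bullet> y) + (real m + 1) * e\<^sup>2"
    by (simp add: power2_sum sum.distrib sum_distrib_left power_mult_distrib mult_ac)
  ultimately have "(\<Sum>j\<le>m. (q * (u j \<bullet> y) + e)\<^sup>2) = q\<^sup>2 * (\<Sum>j\<le>m. (u j \<bullet> y)\<^sup>2) + (real m + 1) * e\<^sup>2"
    by simp
  also have "\<dots> \<le> q\<^sup>2 * ((1 + 1 / real m) * 1) + (real m + 1) * e\<^sup>2"
  proof -
    have "(norm y)\<^sup>2 \<le> 1"
      using assms(3) by (simp add: power_le_one)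
    then have "(1 + 1 / real m) * (norm y)\<^sup>2 \<le> (1 + 1 / real m) * 1"
      by (intro mult_left_mono) simp_all
    then show ?thesis
      using regular_simplex_sum_inner_sq_le[OF assms(1,2), of y]
      by (intro add_right_mono mult_left_mono) simp_all
  qed
  also have "\<dots> = q * (q * (1 + 1 / real m)) + ((real m + 1) * e) * e"
    by (simp only: power2_eq_square mult_1_right mult.assoc)
  also have "\<dots> = 1"
  proof -
    have nz: "real m \<noteq> 0" "real m + 1 \<noteq> 0"
      using assms(2) by simp_all
    then have "1 + 1 / real m = (real m + 1) / real m"
      by (simp add: field_simps)
    then have "q * (1 + 1 / real m) = 1"
      using nz by (simp add: q_def)
    moreover have "(real m + 1) * e = 1" "q + e = 1"
      using nz by (simp_all add: q_def e_def field_simps)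
    ultimately show ?thesis
      by simp
  qed
  finally show ?thesis .
qed

lemma regular_simplex_lebesgue_le:
  assumes "regular_simplex u m" "0 < m" "norm y \<le> 1"
  shows "(\<Sum>j\<le>m. \<bar>(real m / (real m + 1)) *\<^sub>R u j \<bullet> y + 1 / (real m + 1)\<bar>) \<le> sqrt (real m + 1)"
proof -
  define l where "l j = (real m / (real m + 1)) *\<^sub>R u j \<bullet> y + 1 / (real m + 1)" for j
  have "(\<Sum>j\<le>m. \<bar>l j\<bar>)\<^sup>2 \<le> (\<Sum>j\<le>m. \<bar>l j\<bar>\<^sup>2) * card {..m}"
    by (rule sum_squared_le_sum_of_squares)
  also have "\<dots> \<le> 1 * real (card {..m})"
    using regular_simplex_lagrange_sum_sq_le[OF assms]
    by (intro mult_right_mono) (simp_all add: l_def)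
  also have "\<dots> = real m + 1"
    by simp
  finally show ?thesis
    by (simp add: l_def real_le_rsqrt)
qed

lemma regular_simplex_lagrange_basis:
  fixes u :: "nat \<Rightarrow> real^'n"
  assumes "regular_simplex u CARD('n)"
  shows "lagrange_basis u (\<lambda>j. (real CARD('n) / (real CARD('n) + 1)) *\<^sub>R u j)
    (\<lambda>_. 1 / (real CARD('n) + 1))"
  unfolding lagrange_basis_def
proof (intro allI impI)
  fix j k assume "j \<le> CARD('n)" "k \<le> CARD('n)"
  then have "u j \<bullet> u k = (if j = k then 1 else - 1 / real CARD('n))"
    using assms unfolding regular_simplex_def by blast
  then show "(real CARD('n) / (real CARD('n) + 1)) *\<^sub>R u j \<bullet> u k + 1 / (real CARD('n) + 1)
      = (if j = k then 1 else 0)"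
    by (cases "j = k") (simp_all add: field_simps)
qed

lemma orthonormal_inner_sum:
  fixes e :: "nat \<Rightarrow> 'a::real_inner"
  assumes "finite I" "\<And>j k. j \<in> I \<Longrightarrow> k \<in> I \<Longrightarrow> e j \<bullet> e k = (if j = k then 1 else 0)"
    and "k \<in> I"
  shows "e k \<bullet> (\<Sum>j\<in>I. e j) = 1"
proof -
  have "e k \<bullet> (\<Sum>j\<in>I. e j) = (\<Sum>j\<in>I. if k = j then 1 else 0)"
    unfolding inner_sum_right using assms(2,3) by (intro sum.cong) auto
  then show ?thesis
    using assms(1,3) by simp
qed

lemma orthonormal_sum_inner_sum:
  fixes e :: "nat \<Rightarrow> 'a::real_inner"
  assumes "finite I" "\<And>j k. j \<in> I \<Longrightarrow> k \<in> I \<Longrightarrow> e j \<bullet> e k = (if j = k then 1 else 0)"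
  shows "(\<Sum>j\<in>I. e j) \<bullet> (\<Sum>j\<in>I. e j) = real (card I)"
  using orthonormal_inner_sum[OF assms] by (simp add: inner_sum_left)

lemma regular_simplex_of_orthonormal:
  fixes e :: "nat \<Rightarrow> 'a::real_inner"
  assumes "0 < m"
    and orth: "\<And>j k. j \<in> {1..m} \<Longrightarrow> k \<in> {1..m} \<Longrightarrow> e j \<bullet> e k = (if j = k then 1 else 0)"
    and r_sq: "r * r = 1 / real m" and a_sq: "a * a = (real m + 1) / real m"
    and ab: "a + real m * b = r"
  defines "w \<equiv> \<Sum>j\<in>{1..m}. e j"
  shows "regular_simplex (\<lambda>j. if j = 0 then - r *\<^sub>R w else a *\<^sub>R e j + b *\<^sub>R w) m"
proof -
  \<comment> \<open>The simplex with vertices \<open>e 1, \<dots>, e m\<close> and a suitable point on the diagonal,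
    recentred at the origin and rescaled to the unit sphere.\<close>
  define u where "u j = (if j = 0 then - r *\<^sub>R w else a *\<^sub>R e j + b *\<^sub>R w)" for j
  have w_e: "e k \<bullet> w = 1" if "k \<in> {1..m}" for k
    unfolding w_def using orthonormal_inner_sum[OF _ orth that] by simp
  have w_w: "w \<bullet> w = real m"
    unfolding w_def using orthonormal_sum_inner_sum[of "{1..m}" e, OF _ orth] by simp
  have m: "real m > 0"
    using assms(1) by simp
  have rrm: "r * (r * real m) = 1"
    using r_sq m by (simp add: mult.assoc[symmetric])
  have ba: "b * (a + r) = - 1 / real m"
  proof -
    have "b = (r - a) / real m"
      using ab m by (simp add: field_simps)
    then have "b * (a + r) = (r * r - a * a) / real m"
      by (simp add: algebra_simps)
    then show ?thesis
      using m by (simp add: r_sq a_sq field_simps)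
  qed
  have u_w: "u j \<bullet> w = (if j = 0 then - r * real m else r)" if "j \<le> m" for j
    using that ab w_e[of j] by (auto simp: u_def w_w algebra_simps)
  have u_e: "u j \<bullet> e k = (if j = 0 then - r else (if j = k then a else 0) + b)"
    if "j \<le> m" "k \<in> {1..m}" for j k
    using that orth[of j k] w_e[of k] by (auto simp: u_def inner_add_left inner_commute[of w])
  have "u j \<bullet> u k = (if j = k then 1 else - 1 / real m)" if "j \<le> m" "k \<le> m" for j k
  proof (cases "k = 0")
    case True
    then have "u j \<bullet> u k = - r * (u j \<bullet> w)"
      by (simp add: u_def)
    then show ?thesis
      using u_w[OF that(1)] True m by (auto simp: r_sq rrm algebra_simps)
  next
    case False
    then have k: "k \<in> {1..m}"
      using that(2) by simp
    have "u j \<bullet> u k = a * (u j \<bullet> e k) + b * (u j \<bullet> w)"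
      using False by (simp add: u_def inner_add_right)
    also have "\<dots> = (if j = 0 then - r * (a + real m * b) else (if j = k then a * a else 0) + b * (a + r))"
      using u_e[OF that(1) k] u_w[OF that(1)] by (simp add: algebra_simps)
    also have "\<dots> = (if j = k then 1 else - 1 / real m)"
    proof (cases "j = 0")
      case True
      then show ?thesis
        using False by (simp add: ab r_sq)
    next
      case False
      have "real m \<noteq> 0"
        using m by simp
      then show ?thesis
        using False by (cases "j = k") (simp_all add: ba a_sq field_simps)
    qed
    finally show ?thesis .
  qed
  then show ?thesis
    unfolding regular_simplex_def u_def by blast
qed

lemma regular_simplex_exists: "\<exists>u :: nat \<Rightarrow> real^'n. regular_simplex u CARD('n)"
proof -
  define m where "m = real CARD('n)"
  define r where "r = 1 / sqrt m"
  define a where "a = sqrt ((m + 1) / m)"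
  have m: "m > 0"
    by (simp add: m_def)
  then have "r * r = 1 / m" "a * a = (m + 1) / m" "a + m * ((r - a) / m) = r"
    by (simp_all add: r_def a_def real_sqrt_mult[symmetric])
  note relations = this[unfolded m_def]
  obtain h where h: "bij_betw h {1..CARD('n)} (UNIV :: 'n set)"
    using ex_bij_betw_nat_finite_1[of "UNIV :: 'n set"] by auto
  have "axis (h j) (1::real) \<bullet> axis (h k) 1 = (if j = k then 1 else 0)"
    if "j \<in> {1..CARD('n)}" "k \<in> {1..CARD('n)}" for j k
  proof -
    have "h j = h k \<longleftrightarrow> j = k"
      using h that unfolding bij_betw_def inj_on_def by blast
    then show ?thesis
      by (simp add: inner_axis_axis)
  qed
  from regular_simplex_of_orthonormal[OF zero_less_card_finite this relations]
  show ?thesis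
    by blast
qed

lemma admissible_nodes_if_lagrange_basis:
  assumes "\<forall>j\<le>CARD('n). norm (x j) \<le> 1" "lagrange_basis (x :: nat \<Rightarrow> real^'n) A c"
  shows "admissible_nodes x"
proof -
  have delta: "A j \<bullet> x k + c j = (if j = k then 1 else 0)" if "j \<le> CARD('n)" "k \<le> CARD('n)" for j k
    using assms(2) that unfolding lagrange_basis_def by blast
  have inj: "inj_on x {..CARD('n)}"
  proof (rule inj_onI)
    fix j k assume "j \<in> {..CARD('n)}" "k \<in> {..CARD('n)}" "x j = x k"
    then have "(if j = k then 1 else 0) = (1::real)"
      using delta[of j j] delta[of j k] by simp
    then show "j = k"
      by (metis zero_neq_one)
  qed
  have "\<exists>a b. a \<bullet> x j + b = 1 \<and> (\<forall>w\<in>x ` {..CARD('n)} - {x j}. a \<bullet> w + b = 0)"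
    if "j \<le> CARD('n)" for j
  proof (intro exI conjI ballI)
    show "A j \<bullet> x j + c j = 1"
      using delta[OF that that] by simp
  next
    fix w assume "w \<in> x ` {..CARD('n)} - {x j}"
    then obtain k where "k \<le> CARD('n)" "w = x k" "k \<noteq> j"
      by auto
    then show "A j \<bullet> w + c j = 0"
      using delta[OF that] by simp
  qed
  then have "\<not> affine_dependent (x ` {..CARD('n)})"
    by (intro affine_independent_if_separating) auto
  then show ?thesis
    using assms(1) inj by (simp add: admissible_nodes_def mem_cball_0)
qed

lemma admissible_nodes_regular_simplex:
  assumes "regular_simplex (u :: nat \<Rightarrow> real^'n) CARD('n)"
  shows "admissible_nodes u"
  using admissible_nodes_if_lagrange_basis[OF _ regular_simplex_lagrange_basis[OF assms]]
    regular_simplex_norm[OF assms] by simp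

lemma interp_norm_regular_simplex_le:
  assumes "regular_simplex (u :: nat \<Rightarrow> real^'n) CARD('n)"
  shows "interp_norm u \<le> sqrt (real CARD('n) + 1)"
  using regular_simplex_lebesgue_le[OF assms]
  by (intro interp_norm_le_lebesgue[OF admissible_nodes_regular_simplex[OF assms]
        regular_simplex_lagrange_basis[OF assms]]) simp

lemma constant_lt_half: "root 3 pi / (sqrt (12 * exp 1) * root 6 3) < 1 / 2"
proof -
  have "root 3 pi < root 3 8"
    using pi_less_4 by (intro real_root_less_mono) auto
  also have "root 3 8 = 2"
    by (rule real_root_pos_unique) auto
  finally have "root 3 pi < 2" .
  moreover have "4 \<le> sqrt (12 * exp 1) * root 6 3"
  proof -
    have "4 \<le> sqrt (12 * exp 1)"
      using exp_ge_add_one_self[of 1] by (intro real_le_rsqrt) simp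
    moreover have "1 \<le> root 6 3"
      by simp
    ultimately show ?thesis
      using mult_mono[of 4 "sqrt (12 * exp 1)" 1 "root 6 3"] by simp
  qed
  ultimately show ?thesis
    by (simp add: divide_less_eq)
qed

theorem theorem11p4:
  shows "root 3 pi / (sqrt (12 * exp 1) * root 6 3) * sqrt (real CARD('n))
           < theta_ball TYPE('n::finite)
         \<and> theta_ball TYPE('n::finite) \<le> sqrt (real CARD('n) + 1)"
proof -
  let ?T = "{interp_norm (x :: nat \<Rightarrow> real^'n) | x. admissible_nodes x}"
  obtain u :: "nat \<Rightarrow> real^'n" where u: "regular_simplex u CARD('n)"
    using regular_simplex_exists by blast
  have lower: "sqrt (real CARD('n) + 1) / 2 \<le> t" if "t \<in> ?T" for t
    using that interp_norm_ge_sqrt by blast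
  have u_mem: "interp_norm u \<in> ?T"
    using admissible_nodes_regular_simplex[OF u] by blast
  then have "sqrt (real CARD('n) + 1) / 2 \<le> Inf ?T"
    using lower by (intro cInf_greatest) blast+
  moreover have "Inf ?T \<le> interp_norm u"
    using lower by (intro cInf_lower[OF u_mem] bdd_belowI)
  moreover have "root 3 pi / (sqrt (12 * exp 1) * root 6 3) * sqrt (real CARD('n))
      < 1 / 2 * sqrt (real CARD('n))"
    by (rule mult_strict_right_mono[OF constant_lt_half]) simp
  moreover have "1 / 2 * sqrt (real CARD('n)) \<le> sqrt (real CARD('n) + 1) / 2"
    by simp
  ultimately show ?thesis
    using interp_norm_regular_simplex_le[OF u] unfolding theta_ball_def by linarith
qed

end
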